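(* Let $d\ge1$, $m=2^d$, $r\ge2$, $t=\lceil\log_2 r\rceil$, let $p$ be a prime with $p>d$, let $c\in\{0,\dots,r-1\}^m$, $\ell\in\{0,\dots,r-1\}$, and let $\mathrm{Ind}\in\{0,1\}^m$ with $\mathrm{Ind}(i)=1$ iff $c(i)=\ell$. Let $i^*=\min\{i\in[m]:c(i)=\ell\}$ (or $0$ if none). If $i^*=0$ then $\mathrm{SPiRiT}_p(\mathrm{Ind})=0^d$. If $i^*\ge 1$ and $p$ is $A$-correct for $A=\{(T\,\mathrm{Ind})(k):k\in\mathrm{Anc}(i^* )\}$, then $\mathrm{SPiRiT}_p(\mathrm{Ind})$ is the binary representation of $i^*-1$. Moreover, writing each entry of $c$ and $\ell$ by its $t$-bit binary representation, each coordinate of $\mathrm{SPiRiT}_p(\mathrm{Ind})$ is a polynomial over $\mathbb Z_p$ in these $(m+1)t$ bits of degree at most $2t(p-1)^2$.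
   Context: Let $m=2^d$. Consider the complete binary tree with nodes indexed $1,\dots,2m-1$: node $1$ is the root, node $k\in[m-1]$ has left child $2k$ and right child $2k+1$; leaf number $i\in[m]$ is node $m+i-1$. For $i\in[m]$ let $\mathrm{Anc}(i)=\{\lfloor (m+i-1)/2^h\rfloor: h=0,\dots,d\}$ and $\mathrm{Lop}(i)=\{k-1: k\in \mathrm{Anc}(i),\ k\text{ odd},\ k\ge 3\}$. Tree matrix $T\in\{0,1\}^{(2m-1)\times m}$: $T(k,i)=1$ iff $k\in\mathrm{Anc}(i)$. Roots matrix $R\in\{0,1\}^{m\times(2m-1)}$: for $j\in[m-1]$, $R(j,k)=1$ iff $k\in\mathrm{Lop}(j+1)$; row $m$ of $R$ is the indicator vector of $\{1\}$. Pairwise matrix $P\in\{-1,0,1\}^{m\times m}$: $(Pu)(1)=u(1)$ and $(Pu)(k)=u(k)-u(k-1)$ for $k\ge 2$. Sketch matrix $S\in\{0,1\}^{d\times m}$: $S(h,k)$ is the $h$-th bit (coefficient of $2^{h-1}$) of $k-1$. For a prime $p$ and an integer vector $y$, $i_p(y)$ is the vector with entries $y(k)^{p-1}\bmod p$, and $\mathrm{SPiRiT}_p(x)=\big(SP\cdot i_p\big((R\cdot i_p(Tx\bmod p))\bmod p\big)\big)\bmod p$. "Binary representation of $n$" means the vector whose $h$-th entry is the coefficient of $2^{h-1}$ in $n$. For a set $A$ of integers, $p$ is $A$-correct if for every $a\in A$: $a=0$ iff $a\equiv0\pmod p$. *)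

theory Defs
  imports "HOL-Analysis.Analysis"
begin

text \<open>Vectors are functions nat => int, 1-indexed; matrices are functions nat => nat => int.
  The parameter d determines m = 2^d.\<close>

definition matvec :: "(nat \<Rightarrow> nat \<Rightarrow> int) \<Rightarrow> nat \<Rightarrow> (nat \<Rightarrow> int) \<Rightarrow> nat \<Rightarrow> int" where
  "matvec A n x = (\<lambda>k. \<Sum>j=1..n. A k j * x j)"

definition Anc :: "nat \<Rightarrow> nat \<Rightarrow> nat set" where
  "Anc d i = {(2^d + i - 1) div 2^h | h. h \<le> d}"

definition Lop :: "nat \<Rightarrow> nat \<Rightarrow> nat set" where
  "Lop d i = {k - 1 | k. k \<in> Anc d i \<and> odd k \<and> k \<ge> 3}"

text \<open>Tree matrix, (2m-1) x m.\<close>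
definition treeM :: "nat \<Rightarrow> nat \<Rightarrow> nat \<Rightarrow> int" where
  "treeM d k i = (if k \<in> Anc d i then 1 else 0)"

text \<open>Roots matrix, m x (2m-1).\<close>
definition rootsM :: "nat \<Rightarrow> nat \<Rightarrow> nat \<Rightarrow> int" where
  "rootsM d j k = (if j < 2^d then (if k \<in> Lop d (j+1) then 1 else 0)
                   else (if k = 1 then 1 else 0))"

definition pairM :: "nat \<Rightarrow> nat \<Rightarrow> int" where
  "pairM k j = (if j = k then 1 else if k \<ge> 2 \<and> j = k - 1 then -1 else 0)"

definition sketchM :: "nat \<Rightarrow> nat \<Rightarrow> int" where
  "sketchM h k = int (((k - 1) div 2^(h - 1)) mod 2)"

definition ip :: "nat \<Rightarrow> (nat \<Rightarrow> int) \<Rightarrow> nat \<Rightarrow> int" where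
  "ip p y = (\<lambda>k. (y k) ^ (p - 1) mod int p)"

definition SPiRiT :: "nat \<Rightarrow> nat \<Rightarrow> (nat \<Rightarrow> int) \<Rightarrow> nat \<Rightarrow> int" where
  "SPiRiT d p x =
     (let m = 2^d;
          a = (\<lambda>k. matvec (treeM d) m x k mod int p);
          b = (\<lambda>j. matvec (rootsM d) (2*m - 1) (ip p a) j mod int p);
          c = matvec pairM m (ip p b)
      in (\<lambda>h. matvec sketchM m c h mod int p))"

definition binrep :: "nat \<Rightarrow> nat \<Rightarrow> int" where
  "binrep n h = int ((n div 2^(h - 1)) mod 2)"

definition A_correct :: "nat \<Rightarrow> int set \<Rightarrow> bool" where
  "A_correct p A = (\<forall>a\<in>A. a = 0 \<longleftrightarrow> a mod int p = 0)"

definition indvec :: "(nat \<Rightarrow> nat) \<Rightarrow> nat \<Rightarrow> nat \<Rightarrow> int" where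
  "indvec c l = (\<lambda>i. if c i = l then 1 else 0)"

definition istar :: "nat \<Rightarrow> (nat \<Rightarrow> nat) \<Rightarrow> nat \<Rightarrow> nat" where
  "istar m c l = (if \<exists>i\<in>{1..m}. c i = l then (LEAST i. i \<in> {1..m} \<and> c i = l) else 0)"

text \<open>f (defined on the assignment set Dom of the variables V) agrees mod p with
  a polynomial over Z_p (integer coefficients read mod p) of total degree at most D
  in the variables V.\<close>
definition poly_Zp_deg ::
  "nat \<Rightarrow> 'v set \<Rightarrow> nat \<Rightarrow> ('v \<Rightarrow> nat) set \<Rightarrow> (('v \<Rightarrow> nat) \<Rightarrow> int) \<Rightarrow> bool" where
  "poly_Zp_deg p V D Dom f =
     (\<exists>M :: ('v \<Rightarrow> nat) set. \<exists>coef :: ('v \<Rightarrow> nat) \<Rightarrow> int.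
        finite M \<and>
        (\<forall>e\<in>M. (\<forall>v. e v \<noteq> 0 \<longrightarrow> v \<in> V) \<and> (\<Sum>v\<in>V. e v) \<le> D) \<and>
        (\<forall>\<beta>\<in>Dom. f \<beta> mod int p = (\<Sum>e\<in>M. coef e * (\<Prod>v\<in>V. int (\<beta> v) ^ e v)) mod int p))"

definition decode :: "nat \<Rightarrow> (nat \<times> nat \<Rightarrow> nat) \<Rightarrow> nat \<Rightarrow> nat" where
  "decode t \<beta> j = (\<Sum>b=1..t. \<beta> (j, b) * 2^(b - 1))"

end

theory Submission
  imports Defs "HOL-Number_Theory.Residues"
begin

text \<open>By Fermat's little theorem, \<open>i\<^sub>p\<close> turns every residue into the indicator of its being
  nonzero. The first layer therefore flags the tree nodes whose subtree contains a leaf \<open>i\<close> with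
  \<open>c(i) = \<ell>\<close>: this is exact on the ancestors of \<open>i\<^sup>*\<close> by \<open>A\<close>-correctness, and trivially exact on
  subtrees lying strictly left of \<open>i\<^sup>*\<close>, which contain no such leaf. Row \<open>j\<close> of \<open>R\<close> adds the flags
  of the at most \<open>d < p\<close> maximal subtrees tiling the leaves \<open>1..j\<close>, so the second layer is the prefix
  indicator \<open>[i\<^sup>* \<le> j]\<close>. Its discrete derivative \<open>P\<close> is the unit vector at \<open>i\<^sup>*\<close>, which \<open>S\<close> maps to
  the bits of \<open>i\<^sup>* - 1\<close>. For the degree bound, the entries of \<open>Ind\<close> are products of \<open>t\<close> quadratics
  \<open>1 - (b - b')\<^sup>2\<close> in the bits, and each of the two layers raises the degree by a factor \<open>p - 1\<close>.\<close>

section \<open>Polynomials over \<open>\<int>\<^sub>p\<close> of bounded degree\<close>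

lemma poly_Zp_deg_of_indexed:
  fixes I :: "'i set" and E :: "'i \<Rightarrow> 'v \<Rightarrow> nat" and cf :: "'i \<Rightarrow> int"
  assumes fin: "finite I"
    and deg: "\<forall>i\<in>I. (\<forall>v. E i v \<noteq> 0 \<longrightarrow> v \<in> V) \<and> (\<Sum>v\<in>V. E i v) \<le> D"
    and val: "\<forall>\<beta>\<in>Dom. f \<beta> mod int p = (\<Sum>i\<in>I. cf i * (\<Prod>v\<in>V. int (\<beta> v) ^ E i v)) mod int p"
  shows "poly_Zp_deg p V D Dom f"
proof -
  define mon where "mon \<beta> e = (\<Prod>v\<in>V. int (\<beta> v) ^ e v)" for \<beta> e
  have collect: "(\<Sum>i\<in>I. cf i * mon \<beta> (E i)) = (\<Sum>e\<in>E`I. (\<Sum>i\<in>{i\<in>I. E i = e}. cf i) * mon \<beta> e)"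
    for \<beta>
  proof -
    have "(\<Sum>i\<in>I. cf i * mon \<beta> (E i)) = (\<Sum>e\<in>E`I. \<Sum>i\<in>{i\<in>I. E i = e}. cf i * mon \<beta> (E i))"
      by (rule sum.image_gen[OF fin])
    also have "\<dots> = (\<Sum>e\<in>E`I. (\<Sum>i\<in>{i\<in>I. E i = e}. cf i) * mon \<beta> e)"
      by (rule sum.cong) (auto simp: sum_distrib_right)
    finally show ?thesis .
  qed
  show ?thesis
    unfolding poly_Zp_deg_def
    by (rule exI[of _ "E`I"], rule exI[of _ "\<lambda>e. \<Sum>i\<in>{i\<in>I. E i = e}. cf i"])
      (use fin deg val collect in \<open>auto simp: mon_def\<close>)
qed

lemma poly_Zp_deg_cong:
  assumes "\<forall>\<beta>\<in>Dom. f \<beta> mod int p = g \<beta> mod int p" "poly_Zp_deg p V D Dom g"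
  shows "poly_Zp_deg p V D Dom f"
  using assms unfolding poly_Zp_deg_def by (elim exE conjE, intro exI conjI) auto

lemma poly_Zp_deg_mono:
  assumes "D \<le> D'" "poly_Zp_deg p V D Dom f"
  shows "poly_Zp_deg p V D' Dom f"
  using assms unfolding poly_Zp_deg_def by (elim exE conjE, intro exI conjI) (auto intro: order_trans)

lemma poly_Zp_deg_const: "poly_Zp_deg p V 0 Dom (\<lambda>\<beta>. c)"
  by (rule poly_Zp_deg_of_indexed[where I="{()}" and E="\<lambda>_ _. 0" and cf="\<lambda>_. c"]) auto

lemma poly_Zp_deg_var:
  assumes "finite V" "v \<in> V"
  shows "poly_Zp_deg p V 1 Dom (\<lambda>\<beta>. int (\<beta> v))"
proof (rule poly_Zp_deg_of_indexed[where I="{()}" and E="\<lambda>_ w. if w = v then 1 else 0" and cf="\<lambda>_. 1"])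
  have "(\<Prod>w\<in>V. int (\<beta> w) ^ (if w = v then 1 else 0)) = (\<Prod>w\<in>V. if w = v then int (\<beta> w) else 1)"
    for \<beta> by (rule prod.cong) auto
  then show "\<forall>\<beta>\<in>Dom. int (\<beta> v) mod int p =
      (\<Sum>i\<in>{()}. 1 * (\<Prod>w\<in>V. int (\<beta> w) ^ (if w = v then 1 else 0))) mod int p"
    using assms by (simp add: prod.delta)
qed (use assms in \<open>auto simp: sum.delta\<close>)

lemma poly_Zp_deg_add:
  assumes "poly_Zp_deg p V D Dom f" "poly_Zp_deg p V D Dom g"
  shows "poly_Zp_deg p V D Dom (\<lambda>\<beta>. f \<beta> + g \<beta>)"
proof -
  obtain M1 c1 where 1: "finite M1" "\<forall>e\<in>M1. (\<forall>v. e v \<noteq> 0 \<longrightarrow> v \<in> V) \<and> (\<Sum>v\<in>V. e v) \<le> D"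
    "\<forall>\<beta>\<in>Dom. f \<beta> mod int p = (\<Sum>e\<in>M1. c1 e * (\<Prod>v\<in>V. int (\<beta> v) ^ e v)) mod int p"
    using assms(1) unfolding poly_Zp_deg_def by blast
  obtain M2 c2 where 2: "finite M2" "\<forall>e\<in>M2. (\<forall>v. e v \<noteq> 0 \<longrightarrow> v \<in> V) \<and> (\<Sum>v\<in>V. e v) \<le> D"
    "\<forall>\<beta>\<in>Dom. g \<beta> mod int p = (\<Sum>e\<in>M2. c2 e * (\<Prod>v\<in>V. int (\<beta> v) ^ e v)) mod int p"
    using assms(2) unfolding poly_Zp_deg_def by blast
  show ?thesis
  proof (rule poly_Zp_deg_of_indexed[where I="M1 <+> M2" and E="case_sum id id" and cf="case_sum c1 c2"])
    show "\<forall>\<beta>\<in>Dom. (f \<beta> + g \<beta>) mod int p =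
        (\<Sum>i\<in>M1 <+> M2. case_sum c1 c2 i * (\<Prod>v\<in>V. int (\<beta> v) ^ case_sum id id i v)) mod int p"
    proof
      fix \<beta> assume "\<beta> \<in> Dom"
      have "(f \<beta> + g \<beta>) mod int p = (f \<beta> mod int p + g \<beta> mod int p) mod int p"
        by (simp add: mod_add_eq)
      also have "\<dots> = ((\<Sum>e\<in>M1. c1 e * (\<Prod>v\<in>V. int (\<beta> v) ^ e v)) mod int p
          + (\<Sum>e\<in>M2. c2 e * (\<Prod>v\<in>V. int (\<beta> v) ^ e v)) mod int p) mod int p"
        using 1(3) 2(3) \<open>\<beta> \<in> Dom\<close> by simp
      also have "\<dots> = ((\<Sum>e\<in>M1. c1 e * (\<Prod>v\<in>V. int (\<beta> v) ^ e v))
          + (\<Sum>e\<in>M2. c2 e * (\<Prod>v\<in>V. int (\<beta> v) ^ e v))) mod int p"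
        by (simp add: mod_add_eq)
      also have "\<dots> = (\<Sum>i\<in>M1 <+> M2. case_sum c1 c2 i * (\<Prod>v\<in>V. int (\<beta> v) ^ case_sum id id i v)) mod int p"
        using 1(1) 2(1) by (simp add: sum.Plus comp_def)
      finally show "(f \<beta> + g \<beta>) mod int p =
          (\<Sum>i\<in>M1 <+> M2. case_sum c1 c2 i * (\<Prod>v\<in>V. int (\<beta> v) ^ case_sum id id i v)) mod int p" .
    qed
  qed (use 1 2 in auto)
qed

lemma poly_Zp_deg_mult:
  assumes "poly_Zp_deg p V D1 Dom f" "poly_Zp_deg p V D2 Dom g"
  shows "poly_Zp_deg p V (D1 + D2) Dom (\<lambda>\<beta>. f \<beta> * g \<beta>)"
proof -
  obtain M1 c1 where 1: "finite M1" "\<forall>e\<in>M1. (\<forall>v. e v \<noteq> 0 \<longrightarrow> v \<in> V) \<and> (\<Sum>v\<in>V. e v) \<le> D1"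
    "\<forall>\<beta>\<in>Dom. f \<beta> mod int p = (\<Sum>e\<in>M1. c1 e * (\<Prod>v\<in>V. int (\<beta> v) ^ e v)) mod int p"
    using assms(1) unfolding poly_Zp_deg_def by blast
  obtain M2 c2 where 2: "finite M2" "\<forall>e\<in>M2. (\<forall>v. e v \<noteq> 0 \<longrightarrow> v \<in> V) \<and> (\<Sum>v\<in>V. e v) \<le> D2"
    "\<forall>\<beta>\<in>Dom. g \<beta> mod int p = (\<Sum>e\<in>M2. c2 e * (\<Prod>v\<in>V. int (\<beta> v) ^ e v)) mod int p"
    using assms(2) unfolding poly_Zp_deg_def by blast
  define E where "E = (\<lambda>(e1::'a \<Rightarrow> nat, e2::'a \<Rightarrow> nat) v. e1 v + e2 v)"
  define cf where "cf = (\<lambda>(e1, e2). c1 e1 * c2 e2)"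
  show ?thesis
  proof (rule poly_Zp_deg_of_indexed[where I="M1 \<times> M2" and E=E and cf=cf])
    show "\<forall>i\<in>M1 \<times> M2. (\<forall>v. E i v \<noteq> 0 \<longrightarrow> v \<in> V) \<and> (\<Sum>v\<in>V. E i v) \<le> D1 + D2"
      proof
      fix i assume "i \<in> M1 \<times> M2"
      then obtain e1 e2 where i: "i = (e1, e2)" "e1 \<in> M1" "e2 \<in> M2" by auto
      have "(\<Sum>v\<in>V. E i v) = (\<Sum>v\<in>V. e1 v) + (\<Sum>v\<in>V. e2 v)"
        unfolding i E_def by (simp add: sum.distrib)
      then show "(\<forall>v. E i v \<noteq> 0 \<longrightarrow> v \<in> V) \<and> (\<Sum>v\<in>V. E i v) \<le> D1 + D2"
        using 1(2) 2(2) i unfolding E_def by (fastforce intro: add_mono)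
    qed
    show "\<forall>\<beta>\<in>Dom. (f \<beta> * g \<beta>) mod int p = (\<Sum>i\<in>M1 \<times> M2. cf i * (\<Prod>v\<in>V. int (\<beta> v) ^ E i v)) mod int p"
    proof
      fix \<beta> assume "\<beta> \<in> Dom"
      define mon where "mon e = (\<Prod>v\<in>V. int (\<beta> v) ^ e v)" for e
      have mon_add: "mon e1 * mon e2 = mon (E (e1, e2))" for e1 e2
        unfolding mon_def E_def by (simp add: power_add prod.distrib)
      have "(f \<beta> * g \<beta>) mod int p = (f \<beta> mod int p * (g \<beta> mod int p)) mod int p"
        by (simp add: mod_mult_eq)
      also have "\<dots> = ((\<Sum>e\<in>M1. c1 e * mon e) mod int p * ((\<Sum>e\<in>M2. c2 e * mon e) mod int p)) mod int p"
        using 1(3) 2(3) \<open>\<beta> \<in> Dom\<close> unfolding mon_def by simp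
      also have "\<dots> = ((\<Sum>e\<in>M1. c1 e * mon e) * (\<Sum>e\<in>M2. c2 e * mon e)) mod int p"
        by (simp add: mod_mult_eq)
      also have "(\<Sum>e\<in>M1. c1 e * mon e) * (\<Sum>e\<in>M2. c2 e * mon e) = (\<Sum>i\<in>M1 \<times> M2. cf i * mon (E i))"
        unfolding sum_product sum.cartesian_product
        by (rule sum.cong) (auto simp: cf_def mon_add[symmetric] mult_ac)
      finally show "(f \<beta> * g \<beta>) mod int p = (\<Sum>i\<in>M1 \<times> M2. cf i * (\<Prod>v\<in>V. int (\<beta> v) ^ E i v)) mod int p"
        unfolding mon_def .
    qed
  qed (use 1 2 in simp)
qed

lemma poly_Zp_deg_cmult:
  assumes "poly_Zp_deg p V D Dom f"
  shows "poly_Zp_deg p V D Dom (\<lambda>\<beta>. c * f \<beta>)"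
  using poly_Zp_deg_mult[OF poly_Zp_deg_const assms] by simp

lemma poly_Zp_deg_diff:
  assumes "poly_Zp_deg p V D Dom f" "poly_Zp_deg p V D Dom g"
  shows "poly_Zp_deg p V D Dom (\<lambda>\<beta>. f \<beta> - g \<beta>)"
  using poly_Zp_deg_add[OF assms(1) poly_Zp_deg_cmult[OF assms(2), of "-1"]] by simp

lemma poly_Zp_deg_mod:
  assumes "poly_Zp_deg p V D Dom f"
  shows "poly_Zp_deg p V D Dom (\<lambda>\<beta>. f \<beta> mod int p)"
  by (rule poly_Zp_deg_cong[OF _ assms]) simp

lemma poly_Zp_deg_sum:
  assumes "finite S" "\<forall>s\<in>S. poly_Zp_deg p V D Dom (F s)"
  shows "poly_Zp_deg p V D Dom (\<lambda>\<beta>. \<Sum>s\<in>S. F s \<beta>)"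
  using assms
proof (induction S rule: finite_induct)
  case empty
  then show ?case using poly_Zp_deg_mono[OF _ poly_Zp_deg_const, of D] by simp
next
  case (insert x S)
  then show ?case using poly_Zp_deg_add[of p V D Dom "F x"] by simp
qed

lemma poly_Zp_deg_prod:
  assumes "finite S" "\<forall>s\<in>S. poly_Zp_deg p V D Dom (F s)"
  shows "poly_Zp_deg p V (card S * D) Dom (\<lambda>\<beta>. \<Prod>s\<in>S. F s \<beta>)"
  using assms
proof (induction S rule: finite_induct)
  case empty
  then show ?case using poly_Zp_deg_const by simp
next
  case (insert x S)
  then show ?case using poly_Zp_deg_mult[of p V D Dom "F x"] by simp
qed

lemma poly_Zp_deg_power:
  assumes "poly_Zp_deg p V D Dom f"
  shows "poly_Zp_deg p V (n * D) Dom (\<lambda>\<beta>. f \<beta> ^ n)"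
proof (induction n)
  case 0
  then show ?case using poly_Zp_deg_const by simp
next
  case (Suc n)
  then show ?case using poly_Zp_deg_mult[OF assms Suc] by (simp add: add.commute)
qed

lemma poly_Zp_deg_matvec:
  assumes "\<forall>j\<in>{1..n}. poly_Zp_deg p V D Dom (\<lambda>\<beta>. x \<beta> j)"
  shows "poly_Zp_deg p V D Dom (\<lambda>\<beta>. matvec A n (x \<beta>) k)"
  unfolding matvec_def using assms by (intro poly_Zp_deg_sum poly_Zp_deg_cmult ballI) auto

lemma poly_Zp_deg_ip:
  assumes "poly_Zp_deg p V D Dom (\<lambda>\<beta>. y \<beta> k)"
  shows "poly_Zp_deg p V ((p - 1) * D) Dom (\<lambda>\<beta>. ip p (y \<beta>) k)"
  unfolding ip_def by (intro poly_Zp_deg_mod poly_Zp_deg_power assms)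

section \<open>Equality of binary representations\<close>

lemma decode_Suc: "decode (Suc t) \<beta> j = decode t \<beta> j + \<beta> (j, Suc t) * 2^t"
  unfolding decode_def by simp

lemma decode_less:
  assumes "\<forall>b\<in>{1..t}. \<beta> (i,b) \<le> 1"
  shows "decode t \<beta> i < 2^t"
  using assms
proof (induction t)
  case 0
  then show ?case by (simp add: decode_def)
next
  case (Suc t)
  then have "decode t \<beta> i < 2^t" "\<beta> (i, Suc t) \<le> 1" by auto
  then have "decode t \<beta> i + \<beta> (i, Suc t) * 2^t < 2^t + 1 * 2^t"
    by (meson add_less_le_mono mult_le_mono1)
  then show ?case by (simp add: decode_Suc)
qed

lemma decode_eq_iff:
  assumes "\<forall>b\<in>{1..t}. \<beta> (i,b) \<le> 1 \<and> \<beta> (j,b) \<le> 1"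
  shows "decode t \<beta> i = decode t \<beta> j \<longleftrightarrow> (\<forall>b\<in>{1..t}. \<beta> (i,b) = \<beta> (j,b))"
  using assms
proof (induction t)
  case 0
  then show ?case by (simp add: decode_def)
next
  case (Suc t)
  have low: "decode t \<beta> i < 2^t" "decode t \<beta> j < 2^t"
    using Suc.prems by (auto intro: decode_less)
  have "decode (Suc t) \<beta> i = decode (Suc t) \<beta> j \<longleftrightarrow>
        decode t \<beta> i = decode t \<beta> j \<and> \<beta> (i, Suc t) = \<beta> (j, Suc t)"
  proof
    assume eq: "decode (Suc t) \<beta> i = decode (Suc t) \<beta> j"
    have "(decode t \<beta> i + \<beta> (i, Suc t) * 2^t) mod 2^t = (decode t \<beta> j + \<beta> (j, Suc t) * 2^t) mod 2^t"
      "(decode t \<beta> i + \<beta> (i, Suc t) * 2^t) div 2^t = (decode t \<beta> j + \<beta> (j, Suc t) * 2^t) div 2^t"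
      using eq by (simp_all add: decode_Suc)
    then show "decode t \<beta> i = decode t \<beta> j \<and> \<beta> (i, Suc t) = \<beta> (j, Suc t)"
      using low by simp
  qed (simp add: decode_Suc)
  also have "\<dots> \<longleftrightarrow> (\<forall>b\<in>{1..Suc t}. \<beta> (i,b) = \<beta> (j,b))"
    using Suc by (auto simp: le_Suc_eq)
  finally show ?case .
qed

lemma decode_eq_indicator_prod:
  assumes "\<forall>b\<in>{1..t}. \<beta> (i,b) \<le> 1 \<and> \<beta> (j,b) \<le> 1"
  shows "(if decode t \<beta> i = decode t \<beta> j then 1 else 0) =
         (\<Prod>b\<in>{1..t}. 1 - (int (\<beta> (i,b)) - int (\<beta> (j,b)))^2)"
proof -
  have bit: "1 - (int (\<beta> (i,b)) - int (\<beta> (j,b)))^2 = (if \<beta> (i,b) = \<beta> (j,b) then 1 else 0)"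
    if "b \<in> {1..t}" for b
  proof -
    have "\<beta> (i,b) \<le> 1" "\<beta> (j,b) \<le> 1" using assms that by auto
    then show ?thesis by (cases "\<beta> (i,b)"; cases "\<beta> (j,b)"; auto)
  qed
  show ?thesis
  proof (cases "\<forall>b\<in>{1..t}. \<beta> (i,b) = \<beta> (j,b)")
    case True
    then show ?thesis using decode_eq_iff[OF assms] bit by (simp add: prod.neutral)
  next
    case False
    then obtain b where "b \<in> {1..t}" "\<beta> (i,b) \<noteq> \<beta> (j,b)" by auto
    then have "(\<Prod>b\<in>{1..t}. 1 - (int (\<beta> (i,b)) - int (\<beta> (j,b)))^2) = 0"
      using bit by (intro prod_zero) auto
    then show ?thesis using decode_eq_iff[OF assms] False by simp
  qed
qed

lemma poly_Zp_deg_decode_eq: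
  assumes "finite J" "i \<in> J" "j \<in> J" "\<forall>\<beta>\<in>Dom. \<forall>v\<in>J \<times> {1..t}. \<beta> v \<le> 1"
  shows "poly_Zp_deg p (J \<times> {1..t}) (2 * t) Dom
           (\<lambda>\<beta>. if decode t \<beta> i = decode t \<beta> j then 1 else 0)"
proof (rule poly_Zp_deg_cong)
  show "\<forall>\<beta>\<in>Dom. (if decode t \<beta> i = decode t \<beta> j then 1 else 0) mod int p =
      (\<Prod>b\<in>{1..t}. 1 - (int (\<beta> (i,b)) - int (\<beta> (j,b)))^2) mod int p"
    using assms(2-4) by (simp add: decode_eq_indicator_prod)
  have "poly_Zp_deg p (J \<times> {1..t}) 2 Dom (\<lambda>\<beta>. 1 - (int (\<beta> (i,b)) - int (\<beta> (j,b)))^2)"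
    if "b \<in> {1..t}" for b
  proof -
    have "poly_Zp_deg p (J \<times> {1..t}) 1 Dom (\<lambda>\<beta>. int (\<beta> (i,b)) - int (\<beta> (j,b)))"
      using assms(1-3) that by (intro poly_Zp_deg_diff poly_Zp_deg_var) auto
    from poly_Zp_deg_mult[OF this this]
    have "poly_Zp_deg p (J \<times> {1..t}) 2 Dom (\<lambda>\<beta>. (int (\<beta> (i,b)) - int (\<beta> (j,b)))^2)"
      by (simp add: power2_eq_square numeral_2_eq_2)
    then show ?thesis
      by (intro poly_Zp_deg_diff poly_Zp_deg_mono[OF _ poly_Zp_deg_const]) auto
  qed
  from poly_Zp_deg_prod[of "{1..t}", OF _ ballI[OF this]]
  show "poly_Zp_deg p (J \<times> {1..t}) (2 * t) Dom
      (\<lambda>\<beta>. \<Prod>b\<in>{1..t}. 1 - (int (\<beta> (i,b)) - int (\<beta> (j,b)))^2)"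
    by (simp add: mult.commute)
qed

section \<open>Fermat's little theorem as a zero test\<close>

lemma power_prime_minus_one_mod:
  fixes y :: int
  assumes "prime p" "0 \<le> y" "y < int p"
  shows "y ^ (p - 1) mod int p = (if y = 0 then 0 else 1)"
proof (cases "y = 0")
  case True
  then show ?thesis using prime_ge_2_nat[OF assms(1)] by (simp add: power_0_left)
next
  case False
  obtain n where n: "y = int n" using assms(2) nonneg_eq_int by blast
  then have "\<not> p dvd n" using assms(3) False by (auto dest: dvd_imp_le)
  then have "[n ^ (p - 1) = 1] (mod p)" by (rule fermat_theorem[OF assms(1)])
  then have "int (n ^ (p - 1) mod p) = 1"
    using prime_gt_1_nat[OF assms(1)] by (simp add: cong_def)
  then show ?thesis using n False by (simp add: of_nat_mod)
qed

lemma ip_mod_eq: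
  assumes "prime p"
  shows "ip p (\<lambda>k. f k mod int p) k = (if f k mod int p = 0 then 0 else 1)"
  using power_prime_minus_one_mod[OF assms, of "f k mod int p"] prime_gt_0_nat[OF assms]
  unfolding ip_def by simp

section \<open>Ancestors and left-of-path roots in the heap-ordered tree\<close>

lemma heap_level_bounds:
  fixes i d h :: nat
  assumes "i \<in> {1..2^d}" "h \<le> d"
  shows "2^(d-h) \<le> (2^d+i-1) div 2^h" "(2^d+i-1) div 2^h < 2 * 2^(d-h)"
proof -
  have split: "(2::nat)^d = 2^(d-h) * 2^h" using assms(2) by (simp add: power_add[symmetric])
  have "2^(d-h) = (2^(d-h) * 2^h) div (2::nat)^h" by simp
  also have "\<dots> \<le> (2^d+i-1) div 2^h" using split assms(1) by (intro div_le_mono) auto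
  finally show "2^(d-h) \<le> (2^d+i-1) div 2^h" .
  have "2^d+i-1 < (2 * 2^(d-h)) * 2^h" using split assms(1) by auto
  then show "(2^d+i-1) div 2^h < 2 * 2^(d-h)" by (simp add: less_mult_imp_div_less)
qed

lemma power2_level_unique:
  fixes x :: nat
  assumes "2^a \<le> x" "x < 2 * 2^a" "2^b \<le> x" "x < 2 * 2^b"
  shows "a = b"
proof (rule ccontr)
  assume "a \<noteq> b"
  then have "Suc a \<le> b \<or> Suc b \<le> a" by linarith
  then have "(2::nat)^Suc a \<le> 2^b \<or> (2::nat)^Suc b \<le> 2^a"
    by (metis one_le_numeral power_increasing)
  then show False using assms by auto
qed

lemma heap_root: "i \<in> {1..2^d} \<Longrightarrow> (2^d+i-1) div 2^d = (1::nat)"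
  using heap_level_bounds[of i d d] by simp

lemma root_in_Anc: "i \<in> {1..2^d} \<Longrightarrow> 1 \<in> Anc d i"
  unfolding Anc_def using heap_root by force

lemma Lop_Anc_le:
  assumes "k \<in> Lop d (j+1)" "j+1 \<in> {1..2^d}" "i \<in> {1..2^d}" "k \<in> Anc d i"
  shows "i \<le> j"
proof -
  obtain k' h where k': "k = k' - 1" "k' = (2^d + j) div 2^h" "h \<le> d" "odd k'" "k' \<ge> 3"
    using assms(1) unfolding Lop_def Anc_def by auto
  obtain g where g: "k = (2^d + i - 1) div 2^g" "g \<le> d" using assms(4) unfolding Anc_def by auto
  have "h \<noteq> d" using heap_root[OF assms(2)] k' by auto
  then have "k' \<noteq> 2^(d-h)" using k'(3,4) by auto
  then have "2^(d-h) \<le> k" "k < 2 * 2^(d-h)"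
    using heap_level_bounds[OF assms(2) k'(3)] k'(1,2) by auto
  then have "g = h"
    using power2_level_unique heap_level_bounds[OF assms(3) g(2)] g k'(3)
    by (metis diff_diff_cancel)
  then have "(2^d + i - 1) div 2^h < (2^d + j) div 2^h" using g k' by auto
  then have "2^d + i - 1 < 2^d + j" by (meson div_le_mono not_le)
  then show ?thesis by simp
qed

text \<open>At the height just below the lowest common ancestor of leaves \<open>s \<le> j\<close> and \<open>j + 1\<close>, the
  ancestor of \<open>s\<close> is the left sibling of the ancestor of \<open>j + 1\<close>.\<close>

lemma Lop_covers:
  assumes "1 \<le> s" "s \<le> j" "j < 2^d"
  obtains k where "k \<in> Lop d (j+1)" "k \<in> Anc d s" "k \<in> {1..2*2^d-1}"
proof -
  define P where "P h \<longleftrightarrow> (2^d+s-1) div 2^h = ((2^d+j) div 2^h :: nat)" for h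
  have leaves: "s \<in> {1..2^d}" "j+1 \<in> {1..2^d}" using assms by auto
  have "P d" unfolding P_def using heap_root[OF leaves(1)] heap_root[OF leaves(2)] by simp
  define g where "g = (LEAST h. P h)"
  have "P g" "g \<le> d" unfolding g_def using \<open>P d\<close> by (auto intro: LeastI Least_le)
  have "\<not> P 0" using assms unfolding P_def by simp
  then have "g \<noteq> 0" using \<open>P g\<close> by (metis)
  then obtain h where hg: "g = Suc h" using not0_implies_Suc by blast
  have "\<not> P h" using not_less_Least[of h P] hg unfolding g_def by simp
  define a where "a = (2^d+s-1) div (2::nat)^h"
  define a' where "a' = (2^d+j) div (2::nat)^h"
  have "a \<noteq> a'" using \<open>\<not> P h\<close> unfolding P_def a_def a'_def .
  moreover have "a \<le> a'" unfolding a_def a'_def using assms by (intro div_le_mono) auto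
  moreover have "a div 2 = a' div 2"
    using \<open>P g\<close> unfolding P_def a_def a'_def hg by (metis div_mult2_eq power_Suc2)
  ultimately have sibling: "a' = a + 1" "even a" by presburger+
  have "h < d" using \<open>g \<le> d\<close> hg by simp
  have "(2::nat) \<le> 2^(d-h)" using power_increasing[of 1 "d-h" "2::nat"] \<open>h < d\<close> by simp
  moreover have "2^(d-h) \<le> a'"
    using heap_level_bounds(1)[OF leaves(2), of h] \<open>h < d\<close> unfolding a'_def by simp
  ultimately have "a' \<ge> 3" using sibling by presburger
  moreover have "a' \<in> Anc d (j+1)" unfolding Anc_def a'_def using \<open>h < d\<close> by auto
  ultimately have "a \<in> Lop d (j+1)" unfolding Lop_def using sibling by force
  moreover have "a \<in> Anc d s" unfolding Anc_def a_def using \<open>h < d\<close> by auto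
  moreover have "a \<in> {1..2*2^d-1}"
  proof -
    have "1 \<le> (2::nat)^(d-h)" "(2::nat)^(d-h) \<le> 2^d" by (auto intro: power_increasing)
    moreover have "2^(d-h) \<le> a" "a < 2 * 2^(d-h)"
      using heap_level_bounds[OF leaves(1), of h] \<open>h < d\<close> unfolding a_def by auto
    ultimately show ?thesis unfolding atLeastAtMost_iff by linarith
  qed
  ultimately show ?thesis using that by blast
qed

lemma finite_Lop_card_le:
  assumes "i \<in> {1..2^d}"
  shows "finite (Lop d i)" "card (Lop d i) \<le> d"
proof -
  have sub: "{k\<in>Anc d i. odd k \<and> k \<ge> 3} \<subseteq> (\<lambda>h. (2^d+i-1) div 2^h) ` {0..<d}"
    using heap_root[OF assms] unfolding Anc_def by (force simp: less_le)
  have Lop: "Lop d i = (\<lambda>k. k - 1) ` {k\<in>Anc d i. odd k \<and> k \<ge> 3}" unfolding Lop_def by auto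
  have fin: "finite {k\<in>Anc d i. odd k \<and> k \<ge> 3}" using sub finite_surj by blast
  then show "finite (Lop d i)" unfolding Lop by simp
  have "card {k\<in>Anc d i. odd k \<and> k \<ge> 3} \<le> d"
    using card_mono[OF _ sub] card_image_le[of "{0..<d}" "\<lambda>h. (2^d+i-1) div 2^h"] by simp
  then show "card (Lop d i) \<le> d" unfolding Lop using card_image_le[OF fin, of "\<lambda>k. k - 1"] by linarith
qed

section \<open>The two indicator layers of SPiRiT\<close>

text \<open>\<open>subtree_flag d p x k\<close> tests whether the subtree rooted at node \<open>k\<close> carries a nonzero
  entry of \<open>x\<close> (modulo \<open>p\<close>); \<open>prefix_flag d p x j\<close> tests whether some subtree rooted in
  \<open>Lop d (j+1)\<close> does, i.e. whether \<open>x\<close> has a nonzero entry among the leaves \<open>1..j\<close>.\<close>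

definition subtree_flag :: "nat \<Rightarrow> nat \<Rightarrow> (nat \<Rightarrow> int) \<Rightarrow> nat \<Rightarrow> int" where
  "subtree_flag d p x = ip p (\<lambda>k. matvec (treeM d) (2^d) x k mod int p)"

definition prefix_flag :: "nat \<Rightarrow> nat \<Rightarrow> (nat \<Rightarrow> int) \<Rightarrow> nat \<Rightarrow> int" where
  "prefix_flag d p x = ip p (\<lambda>j. matvec (rootsM d) (2*2^d - 1) (subtree_flag d p x) j mod int p)"

lemma SPiRiT_eq_flags:
  "SPiRiT d p x h = matvec sketchM (2^d) (matvec pairM (2^d) (prefix_flag d p x)) h mod int p"
  unfolding SPiRiT_def prefix_flag_def subtree_flag_def Let_def ..

lemma subtree_flag_eq:
  "prime p \<Longrightarrow> subtree_flag d p x k = (if matvec (treeM d) (2^d) x k mod int p = 0 then 0 else 1)"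
  unfolding subtree_flag_def by (rule ip_mod_eq)

lemma prefix_flag_eq:
  "prime p \<Longrightarrow> prefix_flag d p x j =
     (if matvec (rootsM d) (2*2^d - 1) (subtree_flag d p x) j mod int p = 0 then 0 else 1)"
  unfolding prefix_flag_def by (rule ip_mod_eq)

lemma subtree_flag_eq_0:
  assumes "prime p" "\<forall>i\<in>{1..2^d}. k \<in> Anc d i \<longrightarrow> x i = 0"
  shows "subtree_flag d p x k = 0"
proof -
  have "matvec (treeM d) (2^d) x k = 0"
    unfolding matvec_def using assms(2) by (intro sum.neutral) (auto simp: treeM_def)
  then show ?thesis by (simp add: subtree_flag_eq[OF assms(1)])
qed

lemma subtree_flag_eq_1:
  assumes "prime p" "\<forall>i\<in>{1..2^d}. 0 \<le> x i" "s \<in> {1..2^d}" "x s \<noteq> 0" "k \<in> Anc d s"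
    and "A_correct p {matvec (treeM d) (2^d) x k | k. k \<in> Anc d s}"
  shows "subtree_flag d p x k = 1"
proof -
  have "0 \<le> x s" using assms(2,3) by blast
  with assms(4) have "0 < x s" by simp
  moreover have "treeM d k s * x s \<le> matvec (treeM d) (2^d) x k"
    unfolding matvec_def using assms(2,3) by (intro member_le_sum) (auto simp: treeM_def)
  moreover have "treeM d k s = 1" using assms(5) by (simp add: treeM_def)
  ultimately have "x s \<le> matvec (treeM d) (2^d) x k" by simp
  with \<open>0 < x s\<close> have "matvec (treeM d) (2^d) x k \<noteq> 0" by linarith
  moreover have "matvec (treeM d) (2^d) x k \<in> {matvec (treeM d) (2^d) x k | k. k \<in> Anc d s}"
    using assms(5) by blast
  ultimately have "matvec (treeM d) (2^d) x k mod int p \<noteq> 0"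
    using assms(6) unfolding A_correct_def by simp
  then show ?thesis by (simp add: subtree_flag_eq[OF assms(1)])
qed

lemma prefix_flag_before_first:
  assumes "prime p" "s \<in> {1..2^d}" "\<forall>i\<in>{1..2^d}. i < s \<longrightarrow> x i = 0"
    and "j \<in> {1..2^d}" "j < s"
  shows "prefix_flag d p x j = 0"
proof -
  have "subtree_flag d p x k = 0" if "k \<in> Lop d (j+1)" for k
  proof (rule subtree_flag_eq_0[OF assms(1)], intro ballI impI)
    fix i assume "i \<in> {1..2^d}" "k \<in> Anc d i"
    then have "i \<le> j" using Lop_Anc_le[OF that] assms(2,4,5) by auto
    then show "x i = 0" using assms(3,5) \<open>i \<in> {1..2^d}\<close> by auto
  qed
  then have "matvec (rootsM d) (2*2^d - 1) (subtree_flag d p x) j = 0"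
    unfolding matvec_def using assms(2,5) by (intro sum.neutral) (auto simp: rootsM_def)
  then show ?thesis by (simp add: prefix_flag_eq[OF assms(1)])
qed

lemma prefix_flag_from_first:
  assumes "prime p" "d < p" "s \<in> {1..2^d}" "\<forall>k\<in>Anc d s. subtree_flag d p x k = 1"
    and "j \<in> {1..2^d}" "s \<le> j"
  shows "prefix_flag d p x j = 1"
proof -
  define \<sigma> where "\<sigma> = matvec (rootsM d) (2*2^d - 1) (subtree_flag d p x) j"
  have flag01: "0 \<le> subtree_flag d p x k \<and> subtree_flag d p x k \<le> 1" for k
    by (simp add: subtree_flag_eq[OF assms(1)])
  have "0 < \<sigma> \<and> \<sigma> < int p"
  proof (cases "j = 2^d")
    case True
    then have "\<sigma> = (\<Sum>k=1..2*2^d - 1. if k = 1 then subtree_flag d p x k else 0)"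
      unfolding \<sigma>_def matvec_def by (intro sum.cong) (auto simp: rootsM_def)
    also have "\<dots> = subtree_flag d p x 1"
    proof -
      have "(1::nat) \<in> {1..2*2^d - 1}"
        using one_le_power[of "2::nat" d] unfolding atLeastAtMost_iff by linarith
      then show ?thesis by (subst sum.delta) auto
    qed
    finally have "\<sigma> = 1" using assms(4) root_in_Anc[OF assms(3)] by simp
    then show ?thesis using prime_gt_1_nat[OF assms(1)] by simp
  next
    case False
    define K where "K = {1..2*2^d - 1} \<inter> Lop d (j+1)"
    have "\<sigma> = (\<Sum>k\<in>{1..2*2^d - 1}. if k \<in> Lop d (j+1) then subtree_flag d p x k else 0)"
      unfolding \<sigma>_def matvec_def using False assms(5) by (intro sum.cong) (auto simp: rootsM_def)
    then have \<sigma>_K: "\<sigma> = (\<Sum>k\<in>K. subtree_flag d p x k)"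
      unfolding K_def by (simp add: sum.inter_restrict)
    have jm: "j + 1 \<in> {1..2^d}" using False assms(5) by auto
    obtain k0 where k0: "k0 \<in> Lop d (j+1)" "k0 \<in> Anc d s" "k0 \<in> {1..2*2^d-1}"
      by (rule Lop_covers[of s j d]) (use assms(3,5,6) False in auto)
    have "subtree_flag d p x k0 \<le> (\<Sum>k\<in>K. subtree_flag d p x k)"
      by (rule member_le_sum) (use k0 flag01 in \<open>auto simp: K_def\<close>)
    then have "1 \<le> \<sigma>" using assms(4) k0(2) \<sigma>_K by simp
    moreover have "\<sigma> \<le> int (card K)"
      unfolding \<sigma>_K using sum_bounded_above[of K "subtree_flag d p x" 1] flag01 by simp
    moreover have "card K \<le> card (Lop d (j+1))"
      unfolding K_def using finite_Lop_card_le(1)[OF jm] by (intro card_mono) auto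
    ultimately show ?thesis using finite_Lop_card_le(2)[OF jm] assms(2) by linarith
  qed
  then have "\<sigma> mod int p \<noteq> 0" by simp
  then show ?thesis unfolding \<sigma>_def by (simp add: prefix_flag_eq[OF assms(1)])
qed

lemma matvec_pairM_step:
  assumes "s \<in> {1..n}" "\<forall>j\<in>{1..n}. u j = (if s \<le> j then 1 else 0)" "k \<in> {1..n}"
  shows "matvec pairM n u k = (if k = s then 1 else 0)"
proof -
  have "matvec pairM n u k =
      (\<Sum>j=1..n. (if j = k then u k else 0) + (if 2 \<le> k \<and> j = k - 1 then - u (k-1) else 0))"
    unfolding matvec_def by (intro sum.cong) (auto simp: pairM_def)
  also have "\<dots> = u k - (if 2 \<le> k then u (k-1) else 0)"
    using assms(3) by (auto simp: sum.distrib sum.delta)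
  moreover have "u k = (if s \<le> k then 1 else 0)" using assms(2,3) by blast
  moreover have "u (k-1) = (if s \<le> k-1 then 1 else 0)" if "2 \<le> k"
    using bspec[OF assms(2), of "k-1"] assms(3) that by fastforce
  ultimately show ?thesis using assms(1,3) by (cases "2 \<le> k") auto
qed

lemma matvec_sketchM_unit:
  assumes "s \<in> {1..n}" "\<forall>k\<in>{1..n}. v k = (if k = s then 1 else 0)" "2 \<le> p"
  shows "matvec sketchM n v h mod int p = binrep (s - 1) h"
proof -
  have "matvec sketchM n v h = (\<Sum>k=1..n. if k = s then sketchM h s else 0)"
    unfolding matvec_def using assms(2) by (intro sum.cong) auto
  also have "\<dots> = binrep (s - 1) h"
    using assms(1) by (simp add: sketchM_def binrep_def)
  finally show ?thesis using assms(3) by (simp add: binrep_def)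
qed

section \<open>Correctness and degree of SPiRiT\<close>

lemma SPiRiT_eq_0:
  assumes "prime p" "\<forall>i\<in>{1..2^d}. x i = 0"
  shows "SPiRiT d p x h = 0"
proof -
  have "subtree_flag d p x k = 0" for k using assms by (simp add: subtree_flag_eq_0)
  then have "prefix_flag d p x j = 0" for j by (simp add: prefix_flag_eq[OF assms(1)] matvec_def)
  then show ?thesis by (simp add: SPiRiT_eq_flags matvec_def)
qed

lemma SPiRiT_first_nonzero:
  assumes "prime p" "d < p" "\<forall>i\<in>{1..2^d}. 0 \<le> x i"
    and "s \<in> {1..2^d}" "x s \<noteq> 0" "\<forall>i\<in>{1..2^d}. i < s \<longrightarrow> x i = 0"
    and "A_correct p {matvec (treeM d) (2^d) x k | k. k \<in> Anc d s}"
  shows "SPiRiT d p x h = binrep (s - 1) h"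
proof -
  have "\<forall>k\<in>Anc d s. subtree_flag d p x k = 1"
    using subtree_flag_eq_1[OF assms(1,3,4,5) _ assms(7)] by blast
  then have "\<forall>j\<in>{1..2^d}. prefix_flag d p x j = (if s \<le> j then 1 else 0)"
    using prefix_flag_before_first[OF assms(1,4,6)] prefix_flag_from_first[OF assms(1,2,4)]
    by (simp add: not_le)
  then have "\<forall>k\<in>{1..2^d}. matvec pairM (2^d) (prefix_flag d p x) k = (if k = s then 1 else 0)"
    using matvec_pairM_step[OF assms(4)] by blast
  then show ?thesis
    unfolding SPiRiT_eq_flags
    by (rule matvec_sketchM_unit[OF assms(4)]) (use prime_ge_2_nat[OF assms(1)] in simp)
qed

lemma poly_Zp_deg_SPiRiT:
  assumes "\<forall>i\<in>{1..2^d}. poly_Zp_deg p V D Dom (\<lambda>\<beta>. X \<beta> i)"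
  shows "poly_Zp_deg p V ((p - 1)^2 * D) Dom (\<lambda>\<beta>. SPiRiT d p (X \<beta>) h)"
proof -
  have "poly_Zp_deg p V ((p - 1) * D) Dom (\<lambda>\<beta>. subtree_flag d p (X \<beta>) k)" for k
    unfolding subtree_flag_def using assms
    by (intro poly_Zp_deg_ip poly_Zp_deg_mod poly_Zp_deg_matvec)
  then have "poly_Zp_deg p V ((p - 1) * ((p - 1) * D)) Dom (\<lambda>\<beta>. prefix_flag d p (X \<beta>) j)" for j
    unfolding prefix_flag_def
    by (intro poly_Zp_deg_ip poly_Zp_deg_mod poly_Zp_deg_matvec ballI)
  then have "poly_Zp_deg p V ((p - 1) * ((p - 1) * D)) Dom (\<lambda>\<beta>. SPiRiT d p (X \<beta>) h)"
    unfolding SPiRiT_eq_flags by (intro poly_Zp_deg_mod poly_Zp_deg_matvec ballI)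
  then show ?thesis by (simp add: power2_eq_square mult.assoc)
qed

lemma istar_eq_0_iff: "istar m c l = 0 \<longleftrightarrow> (\<forall>i\<in>{1..m}. c i \<noteq> l)"
proof (cases "\<exists>i\<in>{1..m}. c i = l")
  case True
  then have "(LEAST i. i \<in> {1..m} \<and> c i = l) \<in> {1..m}" by (metis (mono_tags, lifting) LeastI)
  then show ?thesis using True unfolding istar_def by auto
qed (auto simp: istar_def)

lemma istar_least:
  assumes "\<exists>i\<in>{1..m}. c i = l"
  shows "istar m c l \<in> {1..m}" "c (istar m c l) = l" "\<forall>i\<in>{1..m}. i < istar m c l \<longrightarrow> c i \<noteq> l"
proof -
  have eq: "istar m c l = (LEAST i. i \<in> {1..m} \<and> c i = l)" using assms unfolding istar_def by simp
  show "istar m c l \<in> {1..m}" "c (istar m c l) = l"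
    unfolding eq using assms by (metis (mono_tags, lifting) LeastI)+
  show "\<forall>i\<in>{1..m}. i < istar m c l \<longrightarrow> c i \<noteq> l"
    unfolding eq using not_less_Least by blast
qed

lemma SPiRiT_indvec_no_match:
  assumes "prime p" "istar (2^d) c l = 0"
  shows "SPiRiT d p (indvec c l) h = 0"
proof (rule SPiRiT_eq_0[OF assms(1)])
  show "\<forall>i\<in>{1..2^d}. indvec c l i = 0"
    using assms(2) unfolding istar_eq_0_iff by (simp add: indvec_def)
qed

lemma SPiRiT_indvec_first_match:
  assumes "prime p" "d < p" "istar (2^d) c l \<ge> 1"
    and "A_correct p {matvec (treeM d) (2^d) (indvec c l) k | k. k \<in> Anc d (istar (2^d) c l)}"
  shows "SPiRiT d p (indvec c l) h = binrep (istar (2^d) c l - 1) h"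
proof -
  have "\<exists>i\<in>{1..2^d}. c i = l" using assms(3) istar_eq_0_iff[of "2^d" c l] by auto
  note first = istar_least[OF this]
  show ?thesis
  proof (rule SPiRiT_first_nonzero[OF assms(1,2) _ first(1) _ _ assms(4)])
    show "\<forall>i\<in>{1..2^d}. 0 \<le> indvec c l i" by (simp add: indvec_def)
    show "indvec c l (istar (2^d) c l) \<noteq> 0" using first(2) by (simp add: indvec_def)
    show "\<forall>i\<in>{1..2^d}. i < istar (2^d) c l \<longrightarrow> indvec c l i = 0"
      using first(3) by (simp add: indvec_def)
  qed
qed

lemma poly_Zp_deg_SPiRiT_decode:
  assumes "\<forall>\<beta>\<in>Dom. \<forall>v\<in>{0..2^d} \<times> {1..t}. \<beta> v \<le> 1"
  shows "poly_Zp_deg p ({0..2^d} \<times> {1..t}) ((p - 1)^2 * (2 * t)) Dom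
           (\<lambda>\<beta>. SPiRiT d p (indvec (decode t \<beta>) (decode t \<beta> 0)) h)"
  unfolding indvec_def using assms by (intro poly_Zp_deg_SPiRiT ballI poly_Zp_deg_decode_eq) auto

theorem lemma3:
  fixes d r p :: nat
  assumes "d \<ge> 1" and "r \<ge> 2" and "prime p" and "p > d"
  defines "m \<equiv> 2 ^ d"
      and "t \<equiv> nat \<lceil>log 2 (real r)\<rceil>"
  shows "(\<forall>(c :: nat \<Rightarrow> nat) l. (\<forall>i\<in>{1..m}. c i < r) \<longrightarrow> l < r \<longrightarrow>
            (istar m c l = 0 \<longrightarrow> (\<forall>h\<in>{1..d}. SPiRiT d p (indvec c l) h = 0)) \<and>
            (istar m c l \<ge> 1 \<longrightarrow>
               A_correct p {matvec (treeM d) m (indvec c l) k | k. k \<in> Anc d (istar m c l)} \<longrightarrow>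
               (\<forall>h\<in>{1..d}. SPiRiT d p (indvec c l) h = binrep (istar m c l - 1) h)))
         \<and> (\<forall>h\<in>{1..d}.
              poly_Zp_deg p ({0..m} \<times> {1..t}) (2 * t * (p - 1)^2)
                {\<beta>. (\<forall>v\<in>{0..m} \<times> {1..t}. \<beta> v \<le> 1) \<and>
                     (\<forall>j\<in>{0..m}. decode t \<beta> j < r)}
                (\<lambda>\<beta>. SPiRiT d p (indvec (decode t \<beta>) (decode t \<beta> 0)) h))"
proof (intro conjI allI impI ballI)
  fix c :: "nat \<Rightarrow> nat" and l h
  show "SPiRiT d p (indvec c l) h = 0" if "istar m c l = 0"
    using that unfolding m_def by (rule SPiRiT_indvec_no_match[OF assms(3)])
  show "SPiRiT d p (indvec c l) h = binrep (istar m c l - 1) h"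
    if "1 \<le> istar m c l"
      and "A_correct p {matvec (treeM d) m (indvec c l) k | k. k \<in> Anc d (istar m c l)}"
    using that unfolding m_def by (rule SPiRiT_indvec_first_match[OF assms(3,4)])
next
  fix h
  have deg: "2 * t * (p - 1)^2 = (p - 1)^2 * (2 * t)" by (rule mult.commute)
  show "poly_Zp_deg p ({0..m} \<times> {1..t}) (2 * t * (p - 1)^2)
      {\<beta>. (\<forall>v\<in>{0..m} \<times> {1..t}. \<beta> v \<le> 1) \<and> (\<forall>j\<in>{0..m}. decode t \<beta> j < r)}
      (\<lambda>\<beta>. SPiRiT d p (indvec (decode t \<beta>) (decode t \<beta> 0)) h)"
    unfolding deg m_def by (rule poly_Zp_deg_SPiRiT_decode) auto
qed

end
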